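(* For $n>2$, the assignment $\eta(a_{ij}^0)=a_{ij}$ and $\eta(a_{ij}^1)=\tau_i a_{ij}\tau_i$ (for $i<j$) extends to a well-defined group homomorphism $\eta\colon G_{n,\mathcal{P}}^2\to G_{n,\mathcal{D}}^2$.
   Context: $G_{n,\mathcal{P}}^2$ has generators $a_{ij}^{\epsilon}=a_{\{i,j\}}^{\epsilon}$ ($\{i,j\}\subset\{1,\dots,n\}$, $i<j$, $\epsilon\in\{0,1\}$) and relations $(a_{ij}^\epsilon)^2=1$; $a_{ij}^{\epsilon}a_{kl}^{\epsilon'}=a_{kl}^{\epsilon'}a_{ij}^{\epsilon}$ for $\{i,j\}\cap\{k,l\}=\emptyset$; $a_{ij}^{\epsilon_{ij}}a_{ik}^{\epsilon_{ik}}a_{jk}^{\epsilon_{jk}}=a_{jk}^{\epsilon_{jk}}a_{ik}^{\epsilon_{ik}}a_{ij}^{\epsilon_{ij}}$ for distinct $i,j,k$ with $\epsilon_{ij}+\epsilon_{ik}+\epsilon_{jk}\equiv0\pmod 2$. $G_{n,\mathcal{D}}^2$ ($G_n^2$ with points) has generators $a_{ij}=a_{\{i,j\}}$ ($i<j$) and $\tau_i$ ($i\in\{1,\dots,n\}$) with relations: $a_{ij}^2=1$; $a_{ij}a_{kl}=a_{kl}a_{ij}$ for distinct $i,j,k,l$; $a_{ij}a_{ik}a_{jk}=a_{jk}a_{ik}a_{ij}$ for distinct $i,j,k$; $\tau_i^2=1$; $\tau_i\tau_j=\tau_j\tau_i$; $\tau_i\tau_ja_{ij}\tau_j\tau_i=a_{ij}$;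 $a_{ij}\tau_k=\tau_ka_{ij}$ for distinct $i,j,k$. *)

theory Defs
  imports "HOL-Algebra.Group"
begin

text \<open>Words over a generator type: letters are pairs (x, b); b = False is the
generator x, b = True is its formal inverse.\<close>

type_synonym 'g word = "('g \<times> bool) list"

definition gword :: "'g set \<Rightarrow> 'g word set" where
  "gword S = lists (S \<times> UNIV)"

inductive_set pres_eq :: "'g set \<Rightarrow> ('g word \<times> 'g word) set \<Rightarrow> ('g word \<times> 'g word) set"
  for S R where
  refl: "w \<in> gword S \<Longrightarrow> (w, w) \<in> pres_eq S R"
| sym: "(u, v) \<in> pres_eq S R \<Longrightarrow> (v, u) \<in> pres_eq S R"
| trans: "(u, v) \<in> pres_eq S R \<Longrightarrow> (v, w) \<in> pres_eq S R \<Longrightarrow> (u, w) \<in> pres_eq S R"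
| rel: "(u, v) \<in> R \<Longrightarrow> u \<in> gword S \<Longrightarrow> v \<in> gword S \<Longrightarrow> (u, v) \<in> pres_eq S R"
| cancel: "x \<in> S \<Longrightarrow> ([(x, b), (x, \<not> b)], []) \<in> pres_eq S R"
| cong: "(u, v) \<in> pres_eq S R \<Longrightarrow> p \<in> gword S \<Longrightarrow> q \<in> gword S \<Longrightarrow>
         (p @ u @ q, p @ v @ q) \<in> pres_eq S R"

definition pres_group :: "'g set \<Rightarrow> ('g word \<times> 'g word) set \<Rightarrow> 'g word set monoid" where
  "pres_group S R =
     \<lparr> carrier = gword S // pres_eq S R,
       mult = (\<lambda>A B. \<Union>a\<in>A. \<Union>b\<in>B. pres_eq S R `` {a @ b}),
       one = pres_eq S R `` {[]} \<rparr>"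

definition wclass :: "'g set \<Rightarrow> ('g word \<times> 'g word) set \<Rightarrow> 'g word \<Rightarrow> 'g word set" where
  "wclass S R w = pres_eq S R `` {w}"

definition lt :: "'g \<Rightarrow> 'g \<times> bool" where
  "lt x = (x, False)"

text \<open>Generator GP i j e stands for a_{ij}^e, with 1 \<le> i < j \<le> n and e \<in> {0,1}.\<close>

datatype genP = GP nat nat nat

definition gensP :: "nat \<Rightarrow> genP set" where
  "gensP n = {GP i j e | i j e. 1 \<le> i \<and> i < j \<and> j \<le> n \<and> e \<in> {0, 1}}"

definition aP :: "nat \<Rightarrow> nat \<Rightarrow> nat \<Rightarrow> genP" where
  "aP i j e = GP (min i j) (max i j) e"

definition relsP :: "nat \<Rightarrow> (genP word \<times> genP word) set" where
  "relsP n =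
     {([lt (aP i j e), lt (aP i j e)], []) | i j e.
        i \<in> {1..n} \<and> j \<in> {1..n} \<and> i \<noteq> j \<and> e \<in> {0, 1}}
   \<union> {([lt (aP i j e), lt (aP k l e')], [lt (aP k l e'), lt (aP i j e)]) | i j k l e e'.
        i \<in> {1..n} \<and> j \<in> {1..n} \<and> k \<in> {1..n} \<and> l \<in> {1..n} \<and>
        i \<noteq> j \<and> k \<noteq> l \<and> {i, j} \<inter> {k, l} = {} \<and> e \<in> {0, 1} \<and> e' \<in> {0, 1}}
   \<union> {([lt (aP i j eij), lt (aP i k eik), lt (aP j k ejk)],
        [lt (aP j k ejk), lt (aP i k eik), lt (aP i j eij)]) | i j k eij eik ejk.
        i \<in> {1..n} \<and> j \<in> {1..n} \<and> k \<in> {1..n} \<and> i \<noteq> j \<and> i \<noteq> k \<and> j \<noteq> k \<and>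
        eij \<in> {0, 1} \<and> eik \<in> {0, 1} \<and> ejk \<in> {0, 1} \<and> (eij + eik + ejk) mod 2 = 0}"

definition GnP :: "nat \<Rightarrow> genP word set monoid" where
  "GnP n = pres_group (gensP n) (relsP n)"

text \<open>GA i j stands for a_{ij} (1 \<le> i < j \<le> n), GT i for \<tau>_i (1 \<le> i \<le> n).\<close>

datatype genD = GA nat nat | GT nat

definition gensD :: "nat \<Rightarrow> genD set" where
  "gensD n = {GA i j | i j. 1 \<le> i \<and> i < j \<and> j \<le> n} \<union> {GT i | i. 1 \<le> i \<and> i \<le> n}"

definition aD :: "nat \<Rightarrow> nat \<Rightarrow> genD" where
  "aD i j = GA (min i j) (max i j)"

definition relsD :: "nat \<Rightarrow> (genD word \<times> genD word) set" where
  "relsD n =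
     {([lt (aD i j), lt (aD i j)], []) | i j.
        i \<in> {1..n} \<and> j \<in> {1..n} \<and> i \<noteq> j}
   \<union> {([lt (aD i j), lt (aD k l)], [lt (aD k l), lt (aD i j)]) | i j k l.
        i \<in> {1..n} \<and> j \<in> {1..n} \<and> k \<in> {1..n} \<and> l \<in> {1..n} \<and>
        distinct [i, j, k, l]}
   \<union> {([lt (aD i j), lt (aD i k), lt (aD j k)], [lt (aD j k), lt (aD i k), lt (aD i j)]) | i j k.
        i \<in> {1..n} \<and> j \<in> {1..n} \<and> k \<in> {1..n} \<and> distinct [i, j, k]}
   \<union> {([lt (GT i), lt (GT i)], []) | i. i \<in> {1..n}}
   \<union> {([lt (GT i), lt (GT j)], [lt (GT j), lt (GT i)]) | i j. i \<in> {1..n} \<and> j \<in> {1..n}}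
   \<union> {([lt (GT i), lt (GT j), lt (aD i j), lt (GT j), lt (GT i)], [lt (aD i j)]) | i j.
        i \<in> {1..n} \<and> j \<in> {1..n} \<and> i \<noteq> j}
   \<union> {([lt (aD i j), lt (GT k)], [lt (GT k), lt (aD i j)]) | i j k.
        i \<in> {1..n} \<and> j \<in> {1..n} \<and> k \<in> {1..n} \<and> distinct [i, j, k]}"

definition GnD :: "nat \<Rightarrow> genD word set monoid" where
  "GnD n = pres_group (gensD n) (relsD n)"

end

theory Submission
  imports Defs
begin

text \<open>By von Dyck's theorem it suffices to show that the substitution a_ij^0 \<mapsto> a_ij,
  a_ij^1 \<mapsto> tau_i a_ij tau_i maps every defining relation of G_{n,P} to a consequence of the
  relations of G_{n,D}. The relations tau_i tau_j a_ij tau_j tau_i = a_ij and a_ij tau_k = tau_k a_ij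
  show that the image of a_ij^e equals tau_m a_ij tau_m for every m that lies in {i, j} exactly
  when e = 1. The square and far commutativity relations are then immediate. In a triangle
  relation of even parity either all exponents vanish, or the two edges with exponent 1 share a
  vertex m, and the relation becomes the conjugate by tau_m of a triangle relation of G_{n,D}.\<close>

lemma gword_append_iff [simp]: "u @ v \<in> gword S \<longleftrightarrow> u \<in> gword S \<and> v \<in> gword S"
  by (auto simp: gword_def)

lemma gword_Nil [simp]: "[] \<in> gword S"
  by (simp add: gword_def)

lemma gword_Cons [simp]: "(x, b) # w \<in> gword S \<longleftrightarrow> x \<in> S \<and> w \<in> gword S"
  by (simp add: gword_def)

declare pres_eq.trans [trans]

lemma pres_eq_gword: "(u, v) \<in> pres_eq S R \<Longrightarrow> u \<in> gword S \<and> v \<in> gword S"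
  by (induction rule: pres_eq.induct) (auto simp: gword_def)

lemma equiv_pres_eq: "equiv (gword S) (pres_eq S R)"
  by (intro equivI refl_onI symI transI)
    (auto dest: pres_eq_gword intro: pres_eq.refl pres_eq.sym pres_eq.trans)

lemma pres_eq_append:
  assumes "(u, u') \<in> pres_eq S R" and "(v, v') \<in> pres_eq S R"
  shows "(u @ v, u' @ v') \<in> pres_eq S R"
proof -
  have "u' \<in> gword S" "v \<in> gword S"
    using assms by (auto dest: pres_eq_gword)
  then have "(u @ v, u' @ v) \<in> pres_eq S R" "(u' @ v, u' @ v') \<in> pres_eq S R"
    using pres_eq.cong[OF assms(1), of "[]" v] pres_eq.cong[OF assms(2), of u' "[]"] by simp_all
  then show ?thesis
    by (rule pres_eq.trans)
qed

definition inv_word :: "'g word \<Rightarrow> 'g word" where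
  "inv_word w = rev (map (\<lambda>(x, b). (x, \<not> b)) w)"

lemma inv_word_gword: "w \<in> gword S \<Longrightarrow> inv_word w \<in> gword S"
  by (auto simp: inv_word_def gword_def)

lemma inv_word_inv_word [simp]: "inv_word (inv_word w) = w"
  by (induction w) (auto simp: inv_word_def)

lemma append_inv_word_pres_eq: "w \<in> gword S \<Longrightarrow> (w @ inv_word w, []) \<in> pres_eq S R"
proof (induction w)
  case Nil
  then show ?case by (auto intro: pres_eq.refl simp: inv_word_def)
next
  case (Cons a w)
  obtain x b where a: "a = (x, b)" by (cases a)
  have x: "x \<in> S" and w: "w \<in> gword S" using Cons.prems a by simp_all
  have "([a] @ (w @ inv_word w) @ [(x, \<not> b)], [a] @ [] @ [(x, \<not> b)]) \<in> pres_eq S R"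
    using Cons.IH[OF w] x a by (intro pres_eq.cong) simp_all
  moreover have "([(x, b), (x, \<not> b)], []) \<in> pres_eq S R"
    using x by (rule pres_eq.cancel)
  ultimately show ?case
    using a by (auto simp: inv_word_def intro: pres_eq.trans)
qed

lemma mult_pres_group_wclass:
  assumes "u \<in> gword S" "v \<in> gword S"
  shows "wclass S R u \<otimes>\<^bsub>pres_group S R\<^esub> wclass S R v = wclass S R (u @ v)"
proof -
  have "(u @ v, w) \<in> pres_eq S R"
    if "(u, u') \<in> pres_eq S R" "(v, v') \<in> pres_eq S R" "(u' @ v', w) \<in> pres_eq S R" for u' v' w
    using pres_eq_append[OF that(1,2)] that(3) by (rule pres_eq.trans)
  moreover have "(u, u) \<in> pres_eq S R" "(v, v) \<in> pres_eq S R"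
    using assms by (auto intro: pres_eq.refl)
  ultimately show ?thesis
    unfolding pres_group_def wclass_def by auto
qed

lemma carrier_pres_group_cases:
  assumes "A \<in> carrier (pres_group S R)"
  obtains w where "w \<in> gword S" "A = wclass S R w"
  using assms unfolding pres_group_def wclass_def by (auto elim: quotientE)

lemma wclass_in_carrier: "w \<in> gword S \<Longrightarrow> wclass S R w \<in> carrier (pres_group S R)"
  unfolding pres_group_def wclass_def by (auto intro: quotientI)

definition subst_word :: "('g \<Rightarrow> 'h word) \<Rightarrow> 'g word \<Rightarrow> 'h word" where
  "subst_word f w = concat (map (\<lambda>(x, b). if b then inv_word (f x) else f x) w)"

lemma subst_word_append [simp]: "subst_word f (u @ v) = subst_word f u @ subst_word f v"
  by (simp add: subst_word_def)

lemma subst_word_Nil [simp]: "subst_word f [] = []"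
  by (simp add: subst_word_def)

lemma subst_word_Cons_lt [simp]: "subst_word f (lt x # w) = f x @ subst_word f w"
  by (simp add: subst_word_def lt_def)

lemma subst_word_gword:
  assumes "f ` S \<subseteq> gword T" and "w \<in> gword S"
  shows "subst_word f w \<in> gword T"
  using assms(2)
proof (induction w)
  case (Cons a w)
  obtain x b where a: "a = (x, b)" by (cases a)
  with Cons.prems have "x \<in> S" "w \<in> gword S" by (auto simp: gword_def)
  with assms(1) have "f x \<in> gword T" "inv_word (f x) \<in> gword T" by (auto intro: inv_word_gword)
  then show ?case
    using Cons.IH \<open>w \<in> gword S\<close> a by (simp add: subst_word_def)
qed simp

lemma pres_eq_subst_word:
  assumes gens: "f ` S \<subseteq> gword T"
    and rels: "\<And>u v. (u, v) \<in> R \<Longrightarrow> (subst_word f u, subst_word f v) \<in> pres_eq T R'"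
    and "(u, v) \<in> pres_eq S R"
  shows "(subst_word f u, subst_word f v) \<in> pres_eq T R'"
  using assms(3)
proof (induction rule: pres_eq.induct)
  case (refl w)
  then show ?case by (intro pres_eq.refl subst_word_gword[OF gens])
next
  case (cancel x b)
  then have "f x \<in> gword T" using gens by blast
  then show ?case
    using append_inv_word_pres_eq[of "f x" T R'] append_inv_word_pres_eq[of "inv_word (f x)" T R']
    by (cases b) (auto simp: subst_word_def inv_word_gword)
next
  case (cong u v p q)
  then show ?case by (simp add: pres_eq.cong subst_word_gword[OF gens])
next
  case (rel u v)
  then show ?case by (intro rels)
next
  case (sym u v)
  from sym.IH show ?case by (rule pres_eq.sym)
next
  case (trans u v w)
  from trans.IH show ?case by (rule pres_eq.trans)
qed

definition induced_hom ::
  "'h set \<Rightarrow> ('h word \<times> 'h word) set \<Rightarrow> ('g \<Rightarrow> 'h word) \<Rightarrow> 'g word set \<Rightarrow> 'h word set" where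
  "induced_hom T R' f A = (\<Union>w\<in>A. wclass T R' (subst_word f w))"

context
  fixes S T :: "_ set" and R R' and f :: "'g \<Rightarrow> 'h word"
  assumes gens: "f ` S \<subseteq> gword T"
    and rels: "\<And>u v. (u, v) \<in> R \<Longrightarrow> (subst_word f u, subst_word f v) \<in> pres_eq T R'"
begin

lemma induced_hom_wclass:
  assumes "w \<in> gword S"
  shows "induced_hom T R' f (wclass S R w) = wclass T R' (subst_word f w)"
proof -
  have same_image: "wclass T R' (subst_word f w') = wclass T R' (subst_word f w)"
    if "w' \<in> wclass S R w" for w'
    using that pres_eq_subst_word[OF gens rels] unfolding wclass_def
    by (intro equiv_class_eq[OF equiv_pres_eq]) (blast intro: pres_eq.sym)
  have "w \<in> wclass S R w"
    using assms unfolding wclass_def by (blast intro: pres_eq.refl)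
  then have "(\<Union>w'\<in>wclass S R w. wclass T R' (subst_word f w)) = wclass T R' (subst_word f w)"
    by blast
  then show ?thesis
    unfolding induced_hom_def using same_image by (metis (no_types, lifting) SUP_cong)
qed

lemma induced_hom_hom: "induced_hom T R' f \<in> hom (pres_group S R) (pres_group T R')"
proof (rule homI)
  fix A assume "A \<in> carrier (pres_group S R)"
  then obtain w where "w \<in> gword S" "A = wclass S R w" by (rule carrier_pres_group_cases)
  then show "induced_hom T R' f A \<in> carrier (pres_group T R')"
    by (simp add: induced_hom_wclass wclass_in_carrier subst_word_gword[OF gens])
next
  fix A B assume "A \<in> carrier (pres_group S R)" "B \<in> carrier (pres_group S R)"
  then obtain u v where "u \<in> gword S" "A = wclass S R u" "v \<in> gword S" "B = wclass S R v"
    by (metis carrier_pres_group_cases)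
  then show "induced_hom T R' f (A \<otimes>\<^bsub>pres_group S R\<^esub> B) =
      induced_hom T R' f A \<otimes>\<^bsub>pres_group T R'\<^esub> induced_hom T R' f B"
    by (simp add: mult_pres_group_wclass induced_hom_wclass subst_word_gword[OF gens])
qed

end

definition commute_in :: "'g set \<Rightarrow> ('g word \<times> 'g word) set \<Rightarrow> 'g word \<Rightarrow> 'g word \<Rightarrow> bool" where
  "commute_in S R u v \<longleftrightarrow> (u @ v, v @ u) \<in> pres_eq S R"

lemma commute_in_sym: "commute_in S R u v \<Longrightarrow> commute_in S R v u"
  unfolding commute_in_def by (rule pres_eq.sym)

lemma commute_in_append_right:
  assumes uv: "commute_in S R u v" and uw: "commute_in S R u w"
  shows "commute_in S R u (v @ w)"
proof -
  have v: "v \<in> gword S" and w: "w \<in> gword S"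
    using assms unfolding commute_in_def by (auto dest!: pres_eq_gword)
  have "(u @ v @ w, v @ u @ w) \<in> pres_eq S R"
    using pres_eq_append[OF uv[unfolded commute_in_def] pres_eq.refl[OF w]] by simp
  also have "(v @ u @ w, v @ w @ u) \<in> pres_eq S R"
    using pres_eq_append[OF pres_eq.refl[OF v] uw[unfolded commute_in_def]] by simp
  finally show ?thesis
    unfolding commute_in_def by simp
qed

lemma commute_in_append_left:
  "commute_in S R u w \<Longrightarrow> commute_in S R v w \<Longrightarrow> commute_in S R (u @ v) w"
  by (metis commute_in_append_right commute_in_sym)

context
  fixes S :: "'g set" and R and t :: "'g word"
  assumes involution: "(t @ t, []) \<in> pres_eq S R"
begin

lemma involution_gword: "t \<in> gword S"
  using pres_eq_gword[OF involution] by simp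

lemma involution_conj_cong:
  assumes "(x, y) \<in> pres_eq S R"
  shows "(t @ x @ t, t @ y @ t) \<in> pres_eq S R"
  using assms involution_gword involution_gword by (rule pres_eq.cong)

lemma involution_conj_append:
  assumes "x \<in> gword S" "y \<in> gword S"
  shows "((t @ x @ t) @ (t @ y @ t), t @ (x @ y) @ t) \<in> pres_eq S R"
  using pres_eq.cong[OF involution, of "t @ x" "y @ t"] assms involution_gword by simp

lemma involution_conj_square:
  assumes "(x @ x, []) \<in> pres_eq S R"
  shows "((t @ x @ t) @ (t @ x @ t), []) \<in> pres_eq S R"
proof -
  have x: "x \<in> gword S" using pres_eq_gword[OF assms] by simp
  have "((t @ x @ t) @ (t @ x @ t), t @ (x @ x) @ t) \<in> pres_eq S R"
    using x x by (rule involution_conj_append)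
  also have "(t @ (x @ x) @ t, t @ [] @ t) \<in> pres_eq S R"
    using assms by (rule involution_conj_cong)
  also have "(t @ [] @ t, []) \<in> pres_eq S R"
    using involution by simp
  finally show ?thesis .
qed

lemma involution_conj_braid:
  assumes x: "(x, t @ a @ t) \<in> pres_eq S R" and y: "(y, t @ b @ t) \<in> pres_eq S R"
    and z: "(z, t @ c @ t) \<in> pres_eq S R" and braid: "(a @ b @ c, c @ b @ a) \<in> pres_eq S R"
  shows "(x @ y @ z, z @ y @ x) \<in> pres_eq S R"
proof -
  have conj3: "((t @ a' @ t) @ (t @ b' @ t) @ (t @ c' @ t), t @ (a' @ b' @ c') @ t) \<in> pres_eq S R"
    if "a' \<in> gword S" "b' \<in> gword S" "c' \<in> gword S" for a' b' c'
  proof -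
    have "((t @ a' @ t) @ (t @ b' @ t) @ (t @ c' @ t), (t @ a' @ t) @ (t @ (b' @ c') @ t))
        \<in> pres_eq S R"
      using that involution_gword
      by (intro pres_eq_append[OF pres_eq.refl involution_conj_append]) auto
    also have "((t @ a' @ t) @ (t @ (b' @ c') @ t), t @ (a' @ b' @ c') @ t) \<in> pres_eq S R"
      using that by (intro involution_conj_append) auto
    finally show ?thesis .
  qed
  have abc: "a \<in> gword S" "b \<in> gword S" "c \<in> gword S"
    using x y z by (auto dest!: pres_eq_gword)
  have "(x @ y @ z, (t @ a @ t) @ (t @ b @ t) @ (t @ c @ t)) \<in> pres_eq S R"
    using x y z by (intro pres_eq_append)
  also have "((t @ a @ t) @ (t @ b @ t) @ (t @ c @ t), t @ (a @ b @ c) @ t) \<in> pres_eq S R"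
    using abc by (rule conj3)
  also have "(t @ (a @ b @ c) @ t, t @ (c @ b @ a) @ t) \<in> pres_eq S R"
    using braid by (rule involution_conj_cong)
  also have "(t @ (c @ b @ a) @ t, (t @ c @ t) @ (t @ b @ t) @ (t @ a @ t)) \<in> pres_eq S R"
    using conj3[OF abc(3,2,1)] by (rule pres_eq.sym)
  also have "((t @ c @ t) @ (t @ b @ t) @ (t @ a @ t), z @ y @ x) \<in> pres_eq S R"
    using x y z by (intro pres_eq.sym[OF pres_eq_append] pres_eq_append)
  finally show ?thesis .
qed

end

abbreviation eqD :: "nat \<Rightarrow> genD word \<Rightarrow> genD word \<Rightarrow> bool" where
  "eqD n u v \<equiv> (u, v) \<in> pres_eq (gensD n) (relsD n)"

abbreviation commD :: "nat \<Rightarrow> genD word \<Rightarrow> genD word \<Rightarrow> bool" where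
  "commD n \<equiv> commute_in (gensD n) (relsD n)"

definition tau_word :: "nat \<Rightarrow> genD word" where
  "tau_word i = [lt (GT i)]"

definition a_word :: "nat \<Rightarrow> nat \<Rightarrow> genD word" where
  "a_word i j = [lt (aD i j)]"

lemma a_word_commute: "a_word i j = a_word j i"
  by (simp add: a_word_def aD_def min.commute max.commute)

context
  fixes n :: nat
begin

lemma GT_in_gensD [simp]: "GT i \<in> gensD n \<longleftrightarrow> i \<in> {1..n}"
  by (auto simp: gensD_def)

lemma GA_in_gensD [simp]: "GA i j \<in> gensD n \<longleftrightarrow> 1 \<le> i \<and> i < j \<and> j \<le> n"
  by (auto simp: gensD_def)

lemma aD_in_gensD [simp]: "i \<in> {1..n} \<Longrightarrow> j \<in> {1..n} \<Longrightarrow> i \<noteq> j \<Longrightarrow> aD i j \<in> gensD n"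
  by (auto simp: gensD_def aD_def min_def max_def)

lemma tau_word_gword [simp]: "i \<in> {1..n} \<Longrightarrow> tau_word i \<in> gword (gensD n)"
  by (simp add: tau_word_def lt_def)

lemma a_word_gword [simp]:
  "i \<in> {1..n} \<Longrightarrow> j \<in> {1..n} \<Longrightarrow> i \<noteq> j \<Longrightarrow> a_word i j \<in> gword (gensD n)"
  by (simp add: a_word_def lt_def)

lemma a_word_square:
  "i \<in> {1..n} \<Longrightarrow> j \<in> {1..n} \<Longrightarrow> i \<noteq> j \<Longrightarrow> eqD n (a_word i j @ a_word i j) []"
  by (rule pres_eq.rel) (auto simp: relsD_def a_word_def lt_def)

lemma tau_word_square: "i \<in> {1..n} \<Longrightarrow> eqD n (tau_word i @ tau_word i) []"
  by (rule pres_eq.rel) (auto simp: relsD_def tau_word_def lt_def)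

lemma commD_tau_word: "i \<in> {1..n} \<Longrightarrow> j \<in> {1..n} \<Longrightarrow> commD n (tau_word i) (tau_word j)"
  unfolding commute_in_def by (rule pres_eq.rel) (auto simp: relsD_def tau_word_def lt_def)

lemma tau_word_pair_conj_a_word:
  "i \<in> {1..n} \<Longrightarrow> j \<in> {1..n} \<Longrightarrow> i \<noteq> j \<Longrightarrow>
    eqD n (tau_word i @ tau_word j @ a_word i j @ tau_word j @ tau_word i) (a_word i j)"
  by (rule pres_eq.rel) (auto simp: relsD_def tau_word_def a_word_def lt_def)

lemma commD_a_word_tau_word:
  "i \<in> {1..n} \<Longrightarrow> j \<in> {1..n} \<Longrightarrow> k \<in> {1..n} \<Longrightarrow> distinct [i, j, k] \<Longrightarrow>
    commD n (a_word i j) (tau_word k)"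
  unfolding commute_in_def
  by (rule pres_eq.rel) (auto simp: relsD_def tau_word_def a_word_def lt_def)

lemma commD_a_word:
  assumes "i \<in> {1..n}" "j \<in> {1..n}" "k \<in> {1..n}" "l \<in> {1..n}" "distinct [i, j, k, l]"
  shows "commD n (a_word i j) (a_word k l)"
  unfolding commute_in_def
proof (rule pres_eq.rel)
  show "(a_word i j @ a_word k l, a_word k l @ a_word i j) \<in> relsD n"
    using assms unfolding relsD_def a_word_def by (intro UnI1 UnI2) auto
qed (use assms in auto)

lemma a_word_braid:
  "i \<in> {1..n} \<Longrightarrow> j \<in> {1..n} \<Longrightarrow> k \<in> {1..n} \<Longrightarrow> distinct [i, j, k] \<Longrightarrow>
    eqD n (a_word i j @ a_word i k @ a_word j k) (a_word j k @ a_word i k @ a_word i j)"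
  by (rule pres_eq.rel) (auto simp: relsD_def a_word_def lt_def)

lemma tau_word_conj_a_word_swap:
  assumes "i \<in> {1..n}" "j \<in> {1..n}" "i \<noteq> j"
  shows "eqD n (tau_word i @ a_word i j @ tau_word i) (tau_word j @ a_word i j @ tau_word j)"
proof -
  let ?ti = "tau_word i" and ?tj = "tau_word j" and ?a = "a_word i j"
  have "eqD n (?ti @ ?a @ ?ti) (?ti @ ?ti @ ?tj @ ?a @ ?tj @ ?ti @ ?ti)"
    using pres_eq.cong[OF pres_eq.sym[OF tau_word_pair_conj_a_word[OF assms]], of ?ti ?ti] assms
    by simp
  also have "eqD n (?ti @ ?ti @ ?tj @ ?a @ ?tj @ ?ti @ ?ti) (?tj @ ?a @ ?tj)"
    using pres_eq_append[OF tau_word_square pres_eq_append[OF pres_eq.refl tau_word_square],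
        of i "?tj @ ?a @ ?tj" i] assms
    by simp
  finally show ?thesis .
qed

lemma tau_word_conj_a_word_fix:
  assumes "i \<in> {1..n}" "j \<in> {1..n}" "k \<in> {1..n}" "distinct [i, j, k]"
  shows "eqD n (tau_word k @ a_word i j @ tau_word k) (a_word i j)"
proof -
  have "eqD n (tau_word k @ a_word i j @ tau_word k) (tau_word k @ tau_word k @ a_word i j)"
    using pres_eq.cong[OF commD_a_word_tau_word[OF assms, unfolded commute_in_def],
        of "tau_word k" "[]"] assms
    by simp
  also have "eqD n (tau_word k @ tau_word k @ a_word i j) (a_word i j)"
    using pres_eq_append[OF tau_word_square pres_eq.refl, of k "a_word i j"] assms by simp
  finally show ?thesis .
qed

end

fun eta_gen :: "genP \<Rightarrow> genD word" where
  "eta_gen (GP i j e) = (if e = 0 then [lt (GA i j)] else [lt (GT i), lt (GA i j), lt (GT i)])"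

lemma eta_gen_aP:
  "eta_gen (aP i j e) =
    (if e = 0 then a_word i j else tau_word (min i j) @ a_word i j @ tau_word (min i j))"
  by (simp add: aP_def a_word_def aD_def tau_word_def)

lemma eta_gen_gword: "x \<in> gensP n \<Longrightarrow> eta_gen x \<in> gword (gensD n)"
  by (auto simp: gensP_def lt_def)

context
  fixes n :: nat
begin

lemma eta_gen_aP_eq_conj:
  assumes "i \<in> {1..n}" "j \<in> {1..n}" "i \<noteq> j" "m \<in> {1..n}" "e \<in> {0, 1}"
    and "m \<in> {i, j} \<longleftrightarrow> e = 1"
  shows "eqD n (eta_gen (aP i j e)) (tau_word m @ a_word i j @ tau_word m)"
proof (cases "e = 0")
  case True
  with assms have "distinct [i, j, m]" by auto
  with True show ?thesis
    using pres_eq.sym[OF tau_word_conj_a_word_fix[OF assms(1,2,4)]] by (simp add: eta_gen_aP)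
next
  case False
  define p where "p = min i j"
  have p: "p \<in> {i, j}" "p \<in> {1..n}" and m: "m \<in> {i, j}"
    using assms False by (auto simp: p_def min_def)
  show ?thesis
  proof (cases "m = p")
    case True
    then show ?thesis
      using False assms by (simp add: eta_gen_aP p_def pres_eq.refl)
  next
    case False
    then have "a_word i j = a_word p m" "p \<noteq> m"
      using p m assms(3) a_word_commute by auto
    then show ?thesis
      using \<open>e \<noteq> 0\<close> tau_word_conj_a_word_swap[OF p(2) assms(4)] by (simp add: eta_gen_aP p_def)
  qed
qed

lemma eta_gen_aP_square:
  assumes "i \<in> {1..n}" "j \<in> {1..n}" "i \<noteq> j"
  shows "eqD n (eta_gen (aP i j e) @ eta_gen (aP i j e)) []"
proof -
  have "min i j \<in> {1..n}" using assms by (simp add: min_def)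
  then show ?thesis
    using a_word_square[OF assms] involution_conj_square[OF tau_word_square a_word_square[OF assms]]
    by (simp add: eta_gen_aP)
qed

lemma commD_eta_gen_aP_left:
  "commD n (a_word i j) y \<Longrightarrow> commD n (tau_word (min i j)) y \<Longrightarrow> commD n (eta_gen (aP i j e)) y"
  by (simp add: eta_gen_aP commute_in_append_left)

lemma commD_eta_gen_aP:
  assumes "i \<in> {1..n}" "j \<in> {1..n}" "k \<in> {1..n}" "l \<in> {1..n}" "distinct [i, j, k, l]"
  shows "commD n (eta_gen (aP i j e)) (eta_gen (aP k l e'))"
proof -
  have min_ij: "min i j \<in> {1..n}" "distinct [k, l, min i j]"
    and min_kl: "min k l \<in> {1..n}" "distinct [i, j, min k l]"
    using assms by (auto simp: min_def)
  show ?thesis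
  proof (intro commD_eta_gen_aP_left commute_in_sym[OF commD_eta_gen_aP_left])
    show "commD n (a_word k l) (a_word i j)"
      using assms by (intro commD_a_word) auto
    show "commD n (tau_word (min k l)) (a_word i j)"
      using min_kl assms by (intro commute_in_sym[OF commD_a_word_tau_word]) auto
    show "commD n (a_word k l) (tau_word (min i j))"
      using min_ij assms by (intro commD_a_word_tau_word) auto
    show "commD n (tau_word (min k l)) (tau_word (min i j))"
      using min_ij min_kl by (intro commD_tau_word)
  qed
qed

lemma eta_gen_aP_braid:
  assumes "i \<in> {1..n}" "j \<in> {1..n}" "k \<in> {1..n}" "distinct [i, j, k]"
    and "eij \<in> {0, 1}" "eik \<in> {0, 1}" "ejk \<in> {0, 1}" "(eij + eik + ejk) mod 2 = 0"
  shows "eqD n (eta_gen (aP i j eij) @ eta_gen (aP i k eik) @ eta_gen (aP j k ejk))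
               (eta_gen (aP j k ejk) @ eta_gen (aP i k eik) @ eta_gen (aP i j eij))"
proof -
  have braid: "eqD n (a_word i j @ a_word i k @ a_word j k) (a_word j k @ a_word i k @ a_word i j)"
    using assms(1-4) by (rule a_word_braid)
  have conj: "eqD n (eta_gen (aP p q e)) (tau_word m @ a_word p q @ tau_word m)"
    if "p \<in> {i, j, k}" "q \<in> {i, j, k}" "p \<noteq> q" "m \<in> {i, j, k}" "e \<in> {0, 1}"
      "m \<in> {p, q} \<longleftrightarrow> e = 1" for p q m e
    using that assms(1-3) by (intro eta_gen_aP_eq_conj) auto
  consider "eij = 0" "eik = 0" "ejk = 0" | "eij = 1" "eik = 1" "ejk = 0"
    | "eij = 1" "eik = 0" "ejk = 1" | "eij = 0" "eik = 1" "ejk = 1"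
    using assms(5-8) by auto
  then show ?thesis
  proof cases
    case 1
    then show ?thesis using braid by (simp add: eta_gen_aP)
  next
    case 2
    then show ?thesis
      using assms(1-4)
      by (intro involution_conj_braid[OF tau_word_square[of i] conj conj conj braid]) auto
  next
    case 3
    then show ?thesis
      using assms(1-4)
      by (intro involution_conj_braid[OF tau_word_square[of j] conj conj conj braid]) auto
  next
    case 4
    then show ?thesis
      using assms(1-4)
      by (intro involution_conj_braid[OF tau_word_square[of k] conj conj conj braid]) auto
  qed
qed

lemma eta_gen_respects_relsP:
  assumes "(u, v) \<in> relsP n"
  shows "eqD n (subst_word eta_gen u) (subst_word eta_gen v)"
  using assms unfolding relsP_def
proof (elim UnE CollectE exE conjE)
  fix i j e
  assume "(u, v) = ([lt (aP i j e), lt (aP i j e)], [])" "i \<in> {1..n}" "j \<in> {1..n}" "i \<noteq> j"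
  then show ?thesis using eta_gen_aP_square by simp
next
  fix i j k l e e'
  assume "(u, v) = ([lt (aP i j e), lt (aP k l e')], [lt (aP k l e'), lt (aP i j e)])"
    "i \<in> {1..n}" "j \<in> {1..n}" "k \<in> {1..n}" "l \<in> {1..n}" "i \<noteq> j" "k \<noteq> l"
    "{i, j} \<inter> {k, l} = {}"
  moreover from this have "distinct [i, j, k, l]" by auto
  ultimately show ?thesis
    using commD_eta_gen_aP[of i j k l e e'] by (simp add: commute_in_def)
next
  fix i j k eij eik ejk
  assume "(u, v) = ([lt (aP i j eij), lt (aP i k eik), lt (aP j k ejk)],
      [lt (aP j k ejk), lt (aP i k eik), lt (aP i j eij)])"
    "i \<in> {1..n}" "j \<in> {1..n}" "k \<in> {1..n}" "i \<noteq> j" "i \<noteq> k" "j \<noteq> k"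
    "eij \<in> {0, 1}" "eik \<in> {0, 1}" "ejk \<in> {0, 1}" "(eij + eik + ejk) mod 2 = 0"
  then show ?thesis using eta_gen_aP_braid[of i j k eij eik ejk] by simp
qed

end

theorem mainTheorem4:
  fixes n :: nat
  assumes "n > 2"
  shows "\<exists>\<eta>. \<eta> \<in> hom (GnP n) (GnD n) \<and>
    (\<forall>i j. 1 \<le> i \<and> i < j \<and> j \<le> n \<longrightarrow>
       \<eta> (wclass (gensP n) (relsP n) [lt (GP i j 0)]) = wclass (gensD n) (relsD n) [lt (GA i j)] \<and>
       \<eta> (wclass (gensP n) (relsP n) [lt (GP i j 1)]) =
         wclass (gensD n) (relsD n) [lt (GT i), lt (GA i j), lt (GT i)])"
proof (intro exI conjI allI impI)
  have gens: "eta_gen ` gensP n \<subseteq> gword (gensD n)"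
    using eta_gen_gword by blast
  note rels = eta_gen_respects_relsP
  show "induced_hom (gensD n) (relsD n) eta_gen \<in> hom (GnP n) (GnD n)"
    unfolding GnP_def GnD_def using gens rels by (rule induced_hom_hom)
  fix i j :: nat
  assume "1 \<le> i \<and> i < j \<and> j \<le> n"
  then have "[lt (GP i j e)] \<in> gword (gensP n)" if "e \<in> {0, 1}" for e
    using that by (auto simp: gensP_def lt_def)
  then show "induced_hom (gensD n) (relsD n) eta_gen (wclass (gensP n) (relsP n) [lt (GP i j 0)])
      = wclass (gensD n) (relsD n) [lt (GA i j)]"
    and "induced_hom (gensD n) (relsD n) eta_gen (wclass (gensP n) (relsP n) [lt (GP i j 1)])
      = wclass (gensD n) (relsD n) [lt (GT i), lt (GA i j), lt (GT i)]"
    by (simp_all add: induced_hom_wclass[OF gens rels])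
qed

end
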